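(* Let $\mathbb{F}$ be an algebraically closed field, $\mathbf{O}$ the split octonion algebra over $\mathbb{F}$, and $T_n\subseteq \mathbb{F}[\mathbf{O}^n]$ the algebra of trace ${\rm G}_2$-invariants. Let $w$ be a (non-associative) word in the letters $x_1,\ldots,x_n$ and write $\mathrm{tr}(w)$ for the function $\underline{a}\mapsto \mathrm{tr}(w(a_1,\ldots,a_n))$ on $\mathbf{O}^n$. For $1\le i_1,\ldots,i_k\le n$ write $\mathrm{tr}(i_1,\ldots,i_k)$ for the function $\underline{a}\mapsto\mathrm{tr}((\cdots((a_{i_1}a_{i_2})a_{i_3})\cdots)a_{i_k})$. Then: 1. If $w$ is not multilinear and $\deg(w)>2$, then $\mathrm{tr}(w)\equiv 0$ in $T_n$. 2. If $w$ is multilinear and is a product of the letters $x_{i_1},\ldots,x_{i_k}$ with $1\le i_1<\cdots<i_k\le n$, then $\mathrm{tr}(w)\equiv \pm\,\mathrm{tr}(i_1,\ldots,i_k)$ in $T_n$. 3. For all $1\le i_1<\cdots<i_k\le n$ with $k\ge 3$ and every permutation $\sigma\in\mathcal{S}_k$, $\mathrm{tr}(i_{\sigma(1)},\ldots,i_{\sigma(k)})\equiv (-1)^{\sigma}\,\mathrm{tr}(i_1,\ldots,i_k)$ in $T_n$.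
   Context: The split octonion algebra $\mathbf{O}$ is the 8-dimensional $\mathbb{F}$-vector space of formal matrices $a=\begin{pmatrix}\alpha&\mathbf{u}\\ \mathbf{v}&\beta\end{pmatrix}$ with $\alpha,\beta\in\mathbb{F}$, $\mathbf{u},\mathbf{v}\in\mathbb{F}^3$, with multiplication $\begin{pmatrix}\alpha&\mathbf{u}\\ \mathbf{v}&\beta\end{pmatrix}\begin{pmatrix}\alpha'&\mathbf{u}'\\ \mathbf{v}'&\beta'\end{pmatrix}=\begin{pmatrix}\alpha\alpha'+\mathbf{u}\cdot\mathbf{v}'&\alpha\mathbf{u}'+\beta'\mathbf{u}-\mathbf{v}\times\mathbf{v}'\\ \alpha'\mathbf{v}+\beta\mathbf{v}'+\mathbf{u}\times\mathbf{u}'&\beta\beta'+\mathbf{v}\cdot\mathbf{u}'\end{pmatrix}$ (dot product and cross product on $\mathbb{F}^3$). Trace $\mathrm{tr}(a)=\alpha+\beta$, norm $n(a)=\alpha\beta-\mathbf{u}\cdot\mathbf{v}$. ${\rm G}_2=\mathrm{Aut}(\mathbf{O})$. The algebra $T_n$ of trace ${\rm G}_2$-invariants is the subalgebra of the polynomial ring $\mathbb{F}[\mathbf{O}^n]$ generated by the functions $\underline{a}\mapsto n(a_i)$ ($1\le i\le n$) and $\underline{a}\mapsto\mathrm{tr}(w(a_1,\ldots,a_n))$ for all non-empty non-associative words $w$ in $x_1,\ldots,x_n$. $T_n$ is graded by total degree (the function $\mathrm{tr}(w)$ has degree the number of letters of $w$, $n(a_i)$ has degree 2); $T_n^+$ denotes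 the span of homogeneous elements of positive degree, and $f\equiv h$ in $T_n$ means $f-h\in (T_n^+)^2$. A word is multilinear if each letter occurs in it at most once. *)

theory Defs
  imports "HOL-Computational_Algebra.Polynomial" "HOL-Combinatorics.Permutations"
begin

definition alg_closed :: "'a::field itself \<Rightarrow> bool" where
  "alg_closed _ \<longleftrightarrow> (\<forall>p :: 'a poly. degree p > 0 \<longrightarrow> (\<exists>x. poly p x = 0))"

type_synonym 'a vec3 = "'a \<times> 'a \<times> 'a"

definition dot3 :: "'a::comm_ring vec3 \<Rightarrow> 'a vec3 \<Rightarrow> 'a" where
  "dot3 u v = (case u of (u1,u2,u3) \<Rightarrow> case v of (v1,v2,v3) \<Rightarrow> u1*v1 + u2*v2 + u3*v3)"

definition cross3 :: "'a::comm_ring vec3 \<Rightarrow> 'a vec3 \<Rightarrow> 'a vec3" where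
  "cross3 u v = (case u of (u1,u2,u3) \<Rightarrow> case v of (v1,v2,v3) \<Rightarrow>
     (u2*v3 - u3*v2, u3*v1 - u1*v3, u1*v2 - u2*v1))"

definition sc3 :: "'a::comm_ring \<Rightarrow> 'a vec3 \<Rightarrow> 'a vec3" where
  "sc3 c u = (case u of (u1,u2,u3) \<Rightarrow> (c*u1, c*u2, c*u3))"

definition add3 :: "'a::comm_ring vec3 \<Rightarrow> 'a vec3 \<Rightarrow> 'a vec3" where
  "add3 u v = (case u of (u1,u2,u3) \<Rightarrow> case v of (v1,v2,v3) \<Rightarrow> (u1+v1, u2+v2, u3+v3))"

definition sub3 :: "'a::comm_ring vec3 \<Rightarrow> 'a vec3 \<Rightarrow> 'a vec3" where
  "sub3 u v = (case u of (u1,u2,u3) \<Rightarrow> case v of (v1,v2,v3) \<Rightarrow> (u1-v1, u2-v2, u3-v3))"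

text \<open>The formal matrix with entries alpha (top left), u (top right), v (bottom left),
  beta (bottom right).\<close>
datatype 'a oct = Oct (oalpha: 'a) (ou: "'a vec3") (ov: "'a vec3") (obeta: 'a)

definition omult :: "'a::comm_ring oct \<Rightarrow> 'a oct \<Rightarrow> 'a oct" where
  "omult a b = Oct
     (oalpha a * oalpha b + dot3 (ou a) (ov b))
     (sub3 (add3 (sc3 (oalpha a) (ou b)) (sc3 (obeta b) (ou a))) (cross3 (ov a) (ov b)))
     (add3 (add3 (sc3 (oalpha b) (ov a)) (sc3 (obeta a) (ov b))) (cross3 (ou a) (ou b)))
     (obeta a * obeta b + dot3 (ov a) (ou b))"

definition otr :: "'a::comm_ring oct \<Rightarrow> 'a" where
  "otr a = oalpha a + obeta a"

definition onorm :: "'a::comm_ring oct \<Rightarrow> 'a" where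
  "onorm a = oalpha a * obeta a - dot3 (ou a) (ov a)"

definition osmult :: "'a::comm_ring \<Rightarrow> 'a oct \<Rightarrow> 'a oct" where
  "osmult c a = Oct (c * oalpha a) (sc3 c (ou a)) (sc3 c (ov a)) (c * obeta a)"

datatype word = Var nat | Mul word word

fun letters :: "word \<Rightarrow> nat list" where
  "letters (Var i) = [i]"
| "letters (Mul w1 w2) = letters w1 @ letters w2"

definition deg :: "word \<Rightarrow> nat" where
  "deg w = length (letters w)"

definition multilinear :: "word \<Rightarrow> bool" where
  "multilinear w \<longleftrightarrow> distinct (letters w)"

text \<open>Points of O^n are tuples a = (a_1,...,a_n), represented as functions on indices;
  only the indices 1..n are used.\<close>
type_synonym 'a point = "nat \<Rightarrow> 'a oct"

fun oeval :: "'a::comm_ring point \<Rightarrow> word \<Rightarrow> 'a oct" where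
  "oeval a (Var i) = a i"
| "oeval a (Mul w1 w2) = omult (oeval a w1) (oeval a w2)"

definition trw :: "word \<Rightarrow> 'a::comm_ring point \<Rightarrow> 'a" where
  "trw w = (\<lambda>a. otr (oeval a w))"

fun lnword :: "nat list \<Rightarrow> word" where
  "lnword [] = Var 0"
| "lnword (i # is) = foldl (\<lambda>w j. Mul w (Var j)) (Var i) is"

definition trl :: "nat list \<Rightarrow> 'a::comm_ring point \<Rightarrow> 'a" where
  "trl is = trw (lnword is)"

inductive_set Tn :: "nat \<Rightarrow> ('a::field point \<Rightarrow> 'a) set" for n where
  const: "(\<lambda>_. c) \<in> Tn n"
| normgen: "1 \<le> i \<Longrightarrow> i \<le> n \<Longrightarrow> (\<lambda>a. onorm (a i)) \<in> Tn n"
| trgen: "set (letters w) \<subseteq> {1..n} \<Longrightarrow> trw w \<in> Tn n"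
| add: "f \<in> Tn n \<Longrightarrow> g \<in> Tn n \<Longrightarrow> (\<lambda>a. f a + g a) \<in> Tn n"
| mult: "f \<in> Tn n \<Longrightarrow> g \<in> Tn n \<Longrightarrow> (\<lambda>a. f a * g a) \<in> Tn n"

text \<open>Homogeneity of degree d (polynomial functions over an infinite field).\<close>
definition homogeneous :: "nat \<Rightarrow> ('a::field point \<Rightarrow> 'a) \<Rightarrow> bool" where
  "homogeneous d f \<longleftrightarrow> (\<forall>t a. f (\<lambda>i. osmult t (a i)) = t ^ d * f a)"

inductive_set Tplus :: "nat \<Rightarrow> ('a::field point \<Rightarrow> 'a) set" for n where
  zero: "(\<lambda>_. 0) \<in> Tplus n"
| hom: "f \<in> Tn n \<Longrightarrow> 0 < d \<Longrightarrow> homogeneous d f \<Longrightarrow> f \<in> Tplus n"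
| add: "f \<in> Tplus n \<Longrightarrow> g \<in> Tplus n \<Longrightarrow> (\<lambda>a. f a + g a) \<in> Tplus n"
| smult: "f \<in> Tplus n \<Longrightarrow> (\<lambda>a. c * f a) \<in> Tplus n"

inductive_set Tplus2 :: "nat \<Rightarrow> ('a::field point \<Rightarrow> 'a) set" for n where
  zero: "(\<lambda>_. 0) \<in> Tplus2 n"
| prod: "f \<in> Tplus n \<Longrightarrow> g \<in> Tplus n \<Longrightarrow> (\<lambda>a. f a * g a) \<in> Tplus2 n"
| add: "f \<in> Tplus2 n \<Longrightarrow> g \<in> Tplus2 n \<Longrightarrow> (\<lambda>a. f a + g a) \<in> Tplus2 n"
| smult: "f \<in> Tplus2 n \<Longrightarrow> (\<lambda>a. c * f a) \<in> Tplus2 n"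

definition equivT :: "nat \<Rightarrow> ('a::field point \<Rightarrow> 'a) \<Rightarrow> ('a point \<Rightarrow> 'a) \<Rightarrow> bool" where
  "equivT n f h \<longleftrightarrow> (\<lambda>a. f a - h a) \<in> Tplus2 n"

end

(*
  Modulo (T_n^+)^2 every product of two traces vanishes.  Tracing the polarised quadratic
  identity of the split octonions
    x(yw) + y(xw) = tr(x) yw + tr(y) xw - (tr(x) tr(y) - tr(xy)) w
  against a further factor z therefore shows that tr((xy)z) and tr((yx)z), and likewise
  tr((x(yw))z) and tr((y(xw))z), are congruent up to the sign -1; for a letter x the identity
  x(xw) = tr(x) xw - n(x) w gives tr((xx)z) = 0.  Since a(bc) ~ -b(ac) ~ (ac)b in such
  contexts, tr((ab)c) = tr(a(bc)) and tr(ab) = tr(ba), every word has, modulo (T_n^+)^2, the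
  trace of a left-normed word in a rearrangement of its letters.  For left-normed words of
  degree at least three, exchanging two adjacent letters changes the sign of the trace, so
  permuting the letters multiplies it by the sign of the permutation; a repeated letter can
  then be brought to the front, where tr((xx)...) = 0.
*)

theory Submission
  imports Defs
begin

section \<open>Trace identities of the split octonions\<close>

lemmas oct_simps = omult_def otr_def onorm_def osmult_def dot3_def cross3_def sc3_def add3_def sub3_def

lemma otr_omult_commute: "otr (omult x y) = otr (omult y (x::'a::comm_ring oct))"
  by (cases x, cases y) (auto simp: oct_simps algebra_simps split: prod.splits)

lemma otr_omult_assoc: "otr (omult (omult x y) z) = otr (omult x (omult y (z::'a::comm_ring oct)))"
  by (cases x, cases y, cases z) (auto simp: oct_simps algebra_simps split: prod.splits)

lemma otr_omult_square_left:
  "otr (omult (omult x x) z) = otr x * otr (omult x z) - onorm x * otr (z::'a::comm_ring oct)"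
  by (cases x, cases z) (auto simp: oct_simps algebra_simps split: prod.splits)

lemma otr_omult_swap_left:
  "otr (omult (omult x y) z) + otr (omult (omult y x) z) =
     otr x * otr (omult y z) + otr y * otr (omult x z)
     - (otr x * otr y - otr (omult x y)) * otr (z::'a::comm_ring oct)"
  by (cases x, cases y, cases z) (auto simp: oct_simps algebra_simps split: prod.splits)

lemma otr_omult_swap_inner:
  "otr (omult (omult x (omult y w)) z) + otr (omult (omult y (omult x w)) z) =
     otr x * otr (omult (omult y w) z) + otr y * otr (omult (omult x w) z)
     - (otr x * otr y - otr (omult x y)) * otr (omult w (z::'a::comm_ring oct))"
  by (cases x, cases y, cases w, cases z) (auto simp: oct_simps algebra_simps split: prod.splits)

lemma omult_osmult: "omult (osmult s x) (osmult t y) = osmult (s * t) (omult x (y::'a::comm_ring oct))"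
  by (cases x, cases y) (auto simp: oct_simps algebra_simps split: prod.splits)

lemma otr_osmult: "otr (osmult t x) = t * otr (x::'a::comm_ring oct)"
  by (cases x) (simp add: oct_simps algebra_simps)

lemma onorm_osmult: "onorm (osmult t x) = t\<^sup>2 * onorm (x::'a::comm_ring_1 oct)"
  by (cases x) (auto simp: oct_simps power2_eq_square algebra_simps split: prod.splits)

section \<open>Congruence modulo (T_n^+)^2\<close>

lemma deg_Var [simp]: "deg (Var i) = 1"
  by (simp add: deg_def)

lemma deg_Mul [simp]: "deg (Mul u v) = deg u + deg v"
  by (simp add: deg_def)

lemma letters_not_Nil [simp]: "letters w \<noteq> []"
  by (induction w) auto

lemma deg_pos: "0 < deg w"
  by (simp add: deg_def)

lemma oeval_osmult: "oeval (\<lambda>i. osmult t (a i)) w = osmult (t ^ deg w) (oeval (a :: 'a::comm_ring_1 point) w)"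
  by (induction w) (simp_all add: omult_osmult power_add)

lemma homogeneous_trw: "homogeneous (deg w) (trw w)"
  by (simp add: homogeneous_def trw_def oeval_osmult otr_osmult)

lemma homogeneous_mult:
  "homogeneous d f \<Longrightarrow> homogeneous e g \<Longrightarrow> homogeneous (d + e) (\<lambda>a. f a * g a)"
  by (simp add: homogeneous_def power_add)

lemma trw_in_Tplus: "set (letters w) \<subseteq> {1..n} \<Longrightarrow> trw w \<in> Tplus n"
  by (rule Tplus.hom[OF Tn.trgen deg_pos homogeneous_trw])

lemma onorm_in_Tplus: "i \<in> {1..n} \<Longrightarrow> (\<lambda>a. onorm (a i)) \<in> Tplus n"
  by (rule Tplus.hom[OF Tn.normgen, of _ _ 2]) (auto simp: homogeneous_def onorm_osmult)

lemma Tplus_diff: "f \<in> Tplus n \<Longrightarrow> g \<in> Tplus n \<Longrightarrow> (\<lambda>a. f a - g a) \<in> Tplus n"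
  using Tplus.add[OF _ Tplus.smult[of g n "-1"], of f] by simp

lemma polar_trw_in_Tplus:
  assumes "set (letters u) \<subseteq> {1..n}" "set (letters v) \<subseteq> {1..n}"
  shows "(\<lambda>a. trw u a * trw v a - trw (Mul u v) a) \<in> Tplus n"
proof (rule Tplus_diff)
  show "(\<lambda>a. trw u a * trw v a) \<in> Tplus n"
    using assms deg_pos[of u]
    by (intro Tplus.hom[where d = "deg u + deg v"] Tn.mult Tn.trgen homogeneous_mult homogeneous_trw) auto
  show "trw (Mul u v) \<in> Tplus n"
    using assms by (intro trw_in_Tplus) simp
qed

lemma Tplus2_diff: "f \<in> Tplus2 n \<Longrightarrow> g \<in> Tplus2 n \<Longrightarrow> (\<lambda>a. f a - g a) \<in> Tplus2 n"
  using Tplus2.add[OF _ Tplus2.smult[of g n "-1"], of f] by simp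

lemma equivT_refl: "equivT n f f"
  by (simp add: equivT_def Tplus2.zero)

lemma equivT_trans_scaled:
  assumes "equivT n f (\<lambda>a. s * g a)" "equivT n g (\<lambda>a. t * h a)"
  shows "equivT n f (\<lambda>a. s * t * h a :: 'a::field)"
proof -
  have "(\<lambda>a. (f a - s * g a) + s * (g a - t * h a)) \<in> Tplus2 n"
    using assms unfolding equivT_def by (intro Tplus2.add Tplus2.smult)
  then show ?thesis
    unfolding equivT_def by (simp add: algebra_simps)
qed

lemma equivT_trans: "equivT n f g \<Longrightarrow> equivT n g h \<Longrightarrow> equivT n f (h :: 'a::field point \<Rightarrow> 'a)"
  using equivT_trans_scaled[where s = 1 and t = 1] by simp

lemma equivT_neg_if_sum_in_Tplus2: "(\<lambda>a. f a + g a) \<in> Tplus2 n \<Longrightarrow> equivT n f (\<lambda>a. - 1 * g a)"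
  by (simp add: equivT_def)

(* A nonempty right context Z is needed: tr(uv) = tr(vu), whereas tr((uv)Z) is congruent
   to -tr((vu)Z). *)
definition right_equivT :: "nat \<Rightarrow> word \<Rightarrow> word \<Rightarrow> 'a::field \<Rightarrow> bool" where
  "right_equivT n X Y s \<longleftrightarrow> (\<forall>Z. set (letters Z) \<subseteq> {1..n} \<longrightarrow>
     equivT n (trw (Mul X Z) :: 'a point \<Rightarrow> 'a) (\<lambda>a. s * trw (Mul Y Z) a))"

lemma right_equivT_refl: "right_equivT n X X 1"
  by (simp add: right_equivT_def equivT_refl)

lemma right_equivT_trans:
  "right_equivT n X Y s \<Longrightarrow> right_equivT n Y W t \<Longrightarrow> right_equivT n X W (s * t)"
  unfolding right_equivT_def using equivT_trans_scaled by blast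

lemma equivT_trw_Mul_left:
  assumes "right_equivT n X Y s" "set (letters W) \<subseteq> {1..n}"
  shows "equivT n (trw (Mul W X)) (\<lambda>a. s * trw (Mul W Y) a)"
  using assms unfolding right_equivT_def by (simp add: trw_def otr_omult_commute[of "oeval _ W"])

lemma right_equivT_Mul_right:
  assumes "right_equivT n X Y s" "set (letters W) \<subseteq> {1..n}"
  shows "right_equivT n (Mul X W) (Mul Y W) s"
  unfolding right_equivT_def
proof (intro allI impI)
  fix Z :: word assume "set (letters Z) \<subseteq> {1..n}"
  then have "equivT n (trw (Mul X (Mul W Z))) (\<lambda>a. s * trw (Mul Y (Mul W Z)) a)"
    using assms unfolding right_equivT_def by simp
  then show "equivT n (trw (Mul (Mul X W) Z)) (\<lambda>a. s * trw (Mul (Mul Y W) Z) a)"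
    by (simp add: trw_def otr_omult_assoc)
qed

lemma right_equivT_Mul_left:
  assumes "right_equivT n X Y s" "set (letters W) \<subseteq> {1..n}"
  shows "right_equivT n (Mul W X) (Mul W Y) s"
  unfolding right_equivT_def
proof (intro allI impI)
  fix Z :: word assume "set (letters Z) \<subseteq> {1..n}"
  then have "equivT n (trw (Mul X (Mul Z W))) (\<lambda>a. s * trw (Mul Y (Mul Z W)) a)"
    using assms unfolding right_equivT_def by simp
  then show "equivT n (trw (Mul (Mul W X) Z)) (\<lambda>a. s * trw (Mul (Mul W Y) Z) a)"
    by (simp add: trw_def otr_omult_assoc otr_omult_commute[of "oeval _ W"])
qed

lemma right_equivT_commute:
  assumes "set (letters u) \<subseteq> {1..n}" "set (letters v) \<subseteq> {1..n}"
  shows "right_equivT n (Mul u v) (Mul v u) (- 1 :: 'a::field)"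
  unfolding right_equivT_def
proof (intro allI impI equivT_neg_if_sum_in_Tplus2)
  fix Z :: word assume Z: "set (letters Z) \<subseteq> {1..n}"
  have "(\<lambda>a. trw (Mul (Mul u v) Z) a + trw (Mul (Mul v u) Z) a) =
    (\<lambda>a. trw u a * trw (Mul v Z) a + trw v a * trw (Mul u Z) a
       - (trw u a * trw v a - trw (Mul u v) a) * trw Z a :: 'a)"
    by (simp add: trw_def otr_omult_swap_left)
  also have "\<dots> \<in> Tplus2 n"
    using assms Z by (intro Tplus2_diff Tplus2.add Tplus2.prod polar_trw_in_Tplus trw_in_Tplus) auto
  finally show "(\<lambda>a. trw (Mul (Mul u v) Z) a + trw (Mul (Mul v u) Z) a :: 'a) \<in> Tplus2 n" .
qed

lemma right_equivT_swap_inner: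
  assumes "set (letters u) \<subseteq> {1..n}" "set (letters v) \<subseteq> {1..n}" "set (letters w) \<subseteq> {1..n}"
  shows "right_equivT n (Mul u (Mul v w)) (Mul v (Mul u w)) (- 1 :: 'a::field)"
  unfolding right_equivT_def
proof (intro allI impI equivT_neg_if_sum_in_Tplus2)
  fix Z :: word assume Z: "set (letters Z) \<subseteq> {1..n}"
  have "(\<lambda>a. trw (Mul (Mul u (Mul v w)) Z) a + trw (Mul (Mul v (Mul u w)) Z) a) =
    (\<lambda>a. trw u a * trw (Mul (Mul v w) Z) a + trw v a * trw (Mul (Mul u w) Z) a
       - (trw u a * trw v a - trw (Mul u v) a) * trw (Mul w Z) a :: 'a)"
    by (simp add: trw_def otr_omult_swap_inner)
  also have "\<dots> \<in> Tplus2 n"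
    using assms Z by (intro Tplus2_diff Tplus2.add Tplus2.prod polar_trw_in_Tplus trw_in_Tplus) auto
  finally show "(\<lambda>a. trw (Mul (Mul u (Mul v w)) Z) a + trw (Mul (Mul v (Mul u w)) Z) a :: 'a)
    \<in> Tplus2 n" .
qed

lemma right_equivT_square:
  assumes "x \<in> {1..n}"
  shows "right_equivT n (Mul (Var x) (Var x)) (Mul (Var x) (Var x)) (0 :: 'a::field)"
  unfolding right_equivT_def
proof (intro allI impI)
  fix Z :: word assume Z: "set (letters Z) \<subseteq> {1..n}"
  have "(\<lambda>a. trw (Mul (Mul (Var x) (Var x)) Z) a) =
    (\<lambda>a. trw (Var x) a * trw (Mul (Var x) Z) a - onorm (a x) * trw Z a :: 'a)"
    by (simp add: trw_def otr_omult_square_left)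
  also have "\<dots> \<in> Tplus2 n"
    using assms Z by (intro Tplus2_diff Tplus2.prod onorm_in_Tplus trw_in_Tplus) auto
  finally show "equivT n (trw (Mul (Mul (Var x) (Var x)) Z))
    (\<lambda>a. (0::'a) * trw (Mul (Mul (Var x) (Var x)) Z) a)"
    by (simp add: equivT_def)
qed

lemma right_equivT_exchange:
  assumes "set (letters u) \<subseteq> {1..n}" "set (letters v) \<subseteq> {1..n}" "set (letters w) \<subseteq> {1..n}"
  shows "right_equivT n (Mul u (Mul v w)) (Mul (Mul u w) v) (1 :: 'a::field)"
  using right_equivT_trans[OF right_equivT_swap_inner right_equivT_commute[where u = v and v = "Mul u w"]] assms
  by simp

lemma right_equivT_swap_last:
  assumes "set (letters P) \<subseteq> {1..n}" "set (letters u) \<subseteq> {1..n}" "set (letters v) \<subseteq> {1..n}"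
  shows "right_equivT n (Mul (Mul P u) v) (Mul (Mul P v) u) (- 1 :: 'a::field)"
  unfolding right_equivT_def
proof (intro allI impI)
  fix Z :: word assume "set (letters Z) \<subseteq> {1..n}"
  then have "equivT n (trw (Mul P (Mul u (Mul v Z))))
      (\<lambda>a. - 1 * trw (Mul P (Mul v (Mul u Z))) a :: 'a)"
    using assms by (intro equivT_trw_Mul_left right_equivT_swap_inner) auto
  then show "equivT n (trw (Mul (Mul (Mul P u) v) Z)) (\<lambda>a. - 1 * trw (Mul (Mul (Mul P v) u) Z) a :: 'a)"
    by (simp add: trw_def otr_omult_assoc)
qed

section \<open>Reduction to left-normed words\<close>

definition mul_letters :: "word \<Rightarrow> nat list \<Rightarrow> word" where
  "mul_letters u cs = foldl (\<lambda>w j. Mul w (Var j)) u cs"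

lemma mul_letters_Nil [simp]: "mul_letters u [] = u"
  by (simp add: mul_letters_def)

lemma mul_letters_Cons [simp]: "mul_letters u (c # cs) = mul_letters (Mul u (Var c)) cs"
  by (simp add: mul_letters_def)

lemma mul_letters_snoc [simp]: "mul_letters u (cs @ [c]) = Mul (mul_letters u cs) (Var c)"
  by (simp add: mul_letters_def)

lemma letters_mul_letters [simp]: "letters (mul_letters u cs) = letters u @ cs"
  by (induction cs arbitrary: u) auto

lemma lnword_Cons [simp]: "lnword (i # is) = mul_letters (Var i) is"
  by (simp add: mul_letters_def)

declare lnword.simps(2) [simp del]

lemma mul_letters_append: "mul_letters u (cs @ ds) = mul_letters (mul_letters u cs) ds"
  by (simp add: mul_letters_def)

lemma right_equivT_mul_letters:
  "right_equivT n X Y s \<Longrightarrow> set cs \<subseteq> {1..n} \<Longrightarrow>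
    right_equivT n (mul_letters X cs) (mul_letters Y cs) s"
  by (induction cs arbitrary: X Y) (simp_all add: right_equivT_Mul_right)

lemma equivT_trw_mul_letters:
  assumes "right_equivT n X Y s" "set cs \<subseteq> {1..n}" "cs \<noteq> []"
  shows "equivT n (trw (mul_letters X cs)) (\<lambda>a. s * trw (mul_letters Y cs) a)"
proof -
  obtain ds c where cs: "cs = ds @ [c]"
    using assms(3) by (cases cs rule: rev_cases) auto
  have "right_equivT n (mul_letters X ds) (mul_letters Y ds) s"
    using assms cs by (intro right_equivT_mul_letters) auto
  then show ?thesis
    using assms(2) cs unfolding right_equivT_def by simp
qed

lemma right_equivT_Mul_mul_letters:
  assumes "set (letters X) \<subseteq> {1..n}" "set (j # js) \<subseteq> {1..n}"
  shows "right_equivT n (Mul X (mul_letters (Var j) js)) (mul_letters X (rev js @ [j])) (1::'a::field)"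
  using assms
proof (induction js arbitrary: X rule: rev_induct)
  case Nil
  show ?case by (simp add: right_equivT_refl)
next
  case (snoc c js)
  have "right_equivT n (Mul X (Mul (mul_letters (Var j) js) (Var c)))
      (Mul (Mul X (Var c)) (mul_letters (Var j) js)) (1::'a)"
    using snoc.prems by (intro right_equivT_exchange) auto
  moreover have "right_equivT n (Mul (Mul X (Var c)) (mul_letters (Var j) js))
      (mul_letters (Mul X (Var c)) (rev js @ [j])) (1::'a)"
    using snoc.prems by (intro snoc.IH) auto
  ultimately show ?case
    using right_equivT_trans by fastforce
qed

lemma right_equivT_lnword:
  assumes "set (letters w) \<subseteq> {1..n}"
  shows "\<exists>\<pi>. mset \<pi> = mset (letters w) \<and> right_equivT n w (lnword \<pi>) (1::'a::field)"
  using assms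
proof (induction w)
  case (Var i)
  show ?case
    by (intro exI[of _ "[i]"]) (simp add: right_equivT_refl)
next
  case (Mul u v)
  obtain \<pi>u where \<pi>u: "mset \<pi>u = mset (letters u)" "right_equivT n u (lnword \<pi>u) (1::'a)"
    using Mul by auto
  obtain \<pi>v where \<pi>v: "mset \<pi>v = mset (letters v)" "right_equivT n v (lnword \<pi>v) (1::'a)"
    using Mul by auto
  obtain i us where i: "\<pi>u = i # us"
    using \<pi>u(1) by (cases \<pi>u) auto
  obtain j js where j: "\<pi>v = j # js"
    using \<pi>v(1) by (cases \<pi>v) auto
  have letters: "set \<pi>u \<subseteq> {1..n}" "set \<pi>v \<subseteq> {1..n}"
    using Mul.prems \<pi>u(1) \<pi>v(1) by (auto dest: mset_eq_setD)
  have "right_equivT n (Mul u v) (Mul (lnword \<pi>u) v) (1::'a)"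
    using Mul.prems \<pi>u(2) by (intro right_equivT_Mul_right) auto
  moreover have "right_equivT n (Mul (lnword \<pi>u) v) (Mul (lnword \<pi>u) (lnword \<pi>v)) (1::'a)"
    using letters \<pi>v(2) i by (intro right_equivT_Mul_left) auto
  moreover have "right_equivT n (Mul (lnword \<pi>u) (lnword \<pi>v)) (lnword (\<pi>u @ rev js @ [j])) (1::'a)"
    using right_equivT_Mul_mul_letters[of "lnword \<pi>u" n j js] letters i j
    by (simp add: mul_letters_append)
  ultimately have "right_equivT n (Mul u v) (lnword (\<pi>u @ rev js @ [j])) (1::'a)"
    by (metis right_equivT_trans mult_1)
  moreover have "mset (\<pi>u @ rev js @ [j]) = mset (letters (Mul u v))"
    using \<pi>u(1) \<pi>v(1) j by simp
  ultimately show ?case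
    by blast
qed

lemma equivT_trw_Mul_mul_letters:
  assumes "set (letters X) \<subseteq> {1..n}" "set (j # js) \<subseteq> {1..n}"
  shows "\<exists>cs. mset cs = mset (j # js) \<and>
    equivT n (trw (Mul X (mul_letters (Var j) js))) (trw (mul_letters X cs) :: 'a::field point \<Rightarrow> 'a)"
proof (cases js rule: rev_cases)
  case Nil
  then show ?thesis
    by (intro exI[of _ "[j]"]) (simp add: equivT_refl)
next
  case (snoc ks c)
  have "right_equivT n (Mul X (mul_letters (Var j) ks)) (mul_letters X (rev ks @ [j])) (1::'a)"
    using assms snoc by (intro right_equivT_Mul_mul_letters) auto
  then have "equivT n (trw (Mul (Mul X (mul_letters (Var j) ks)) (Var c)))
      (\<lambda>a. 1 * trw (Mul (mul_letters X (rev ks @ [j])) (Var c)) a :: 'a)"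
    using assms snoc unfolding right_equivT_def by simp
  then have "equivT n (trw (Mul X (Mul (mul_letters (Var j) ks) (Var c))))
      (trw (mul_letters X (rev ks @ [j, c])) :: 'a point \<Rightarrow> 'a)"
    by (simp add: trw_def otr_omult_assoc mul_letters_append)
  then show ?thesis
    using snoc by (intro exI[of _ "rev ks @ [j, c]"]) simp
qed

lemma equivT_trw_trl:
  assumes "set (letters w) \<subseteq> {1..n}"
  shows "\<exists>\<pi>. mset \<pi> = mset (letters w) \<and> equivT n (trw w) (trl \<pi> :: 'a::field point \<Rightarrow> 'a)"
proof (cases w)
  case (Var i)
  then show ?thesis
    by (intro exI[of _ "[i]"]) (simp add: trl_def equivT_refl)
next
  case (Mul u v)
  obtain \<pi>u where \<pi>u: "mset \<pi>u = mset (letters u)" "right_equivT n u (lnword \<pi>u) (1::'a)"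
    using right_equivT_lnword assms Mul by fastforce
  obtain \<pi>v where \<pi>v: "mset \<pi>v = mset (letters v)" "right_equivT n v (lnword \<pi>v) (1::'a)"
    using right_equivT_lnword assms Mul by fastforce
  obtain i us where i: "\<pi>u = i # us"
    using \<pi>u(1) by (cases \<pi>u) auto
  obtain j js where j: "\<pi>v = j # js"
    using \<pi>v(1) by (cases \<pi>v) auto
  have letters: "set \<pi>u \<subseteq> {1..n}" "set \<pi>v \<subseteq> {1..n}"
    using assms Mul \<pi>u(1) \<pi>v(1) by (auto dest: mset_eq_setD)
  obtain cs where cs: "mset cs = mset (j # js)"
    "equivT n (trw (Mul (lnword \<pi>u) (lnword \<pi>v))) (trw (mul_letters (lnword \<pi>u) cs) :: 'a point \<Rightarrow> 'a)"
    using equivT_trw_Mul_mul_letters[of "lnword \<pi>u" n j js] letters i j by auto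
  have "equivT n (trw (Mul u v)) (\<lambda>a. 1 * trw (Mul (lnword \<pi>u) v) a :: 'a)"
    using assms Mul \<pi>u(2) unfolding right_equivT_def by simp
  moreover have "equivT n (trw (Mul (lnword \<pi>u) v)) (\<lambda>a. 1 * trw (Mul (lnword \<pi>u) (lnword \<pi>v)) a :: 'a)"
    using letters i \<pi>v(2) by (intro equivT_trw_Mul_left) auto
  ultimately have "equivT n (trw (Mul u v)) (trw (mul_letters (lnword \<pi>u) cs) :: 'a point \<Rightarrow> 'a)"
    using cs(2) by (simp, blast intro: equivT_trans)
  then show ?thesis
    using \<pi>u(1) \<pi>v(1) cs(1) i j Mul
    by (intro exI[of _ "\<pi>u @ cs"]) (simp add: trl_def mul_letters_append)
qed

section \<open>Permuting the letters of a left-normed word\<close>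

lemma permute_list_transpose_append:
  "permute_list (transpose (length xs) (Suc (length xs + length ms))) (xs @ x # ms @ y # ys) =
    xs @ y # ms @ x # ys"
proof (rule nth_equalityI)
  let ?i = "length xs" and ?j = "Suc (length xs + length ms)" and ?l = "xs @ x # ms @ y # ys"
  fix k assume "k < length (permute_list (transpose ?i ?j) ?l)"
  then have lhs: "permute_list (transpose ?i ?j) ?l ! k = ?l ! transpose ?i ?j k"
    by (simp add: permute_list_def del: upt_Suc)
  consider "k < ?i" | "k = ?i" | "?i < k" "k < ?j" | "k = ?j" | "?j < k"
    by linarith
  then show "permute_list (transpose ?i ?j) ?l ! k = (xs @ y # ms @ x # ys) ! k"
    unfolding lhs by cases (auto simp: nth_append nth_Cons' transpose_def)
qed simp

lemma split_at_two_positions: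
  assumes "i < j" "j < length l"
  obtains xs x ms y ys where "l = xs @ x # ms @ y # ys" "length xs = i" "Suc (i + length ms) = j"
proof
  have "drop (Suc i) l = take (j - Suc i) (drop (Suc i) l) @ l ! j # drop (Suc j) l"
    using assms id_take_nth_drop[of "j - Suc i" "drop (Suc i) l"] by simp
  then show "l = take i l @ l ! i # take (j - Suc i) (drop (Suc i) l) @ l ! j # drop (Suc j) l"
    using assms id_take_nth_drop[of i l] by simp
qed (use assms in auto)

lemma equivT_swap_distant:
  fixes F :: "nat list \<Rightarrow> 'a::field point \<Rightarrow> 'a"
  assumes adjacent: "\<And>xs x y ys. mset (xs @ x # y # ys) = M \<Longrightarrow>
    equivT n (F (xs @ y # x # ys)) (\<lambda>a. - 1 * F (xs @ x # y # ys) a)"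
  shows "mset (xs @ x # ms @ y # ys) = M \<Longrightarrow>
    equivT n (F (xs @ y # ms @ x # ys)) (\<lambda>a. - 1 * F (xs @ x # ms @ y # ys) a)"
proof (induction ms arbitrary: xs)
  case Nil
  then show ?case
    using adjacent[of xs x y ys] by simp
next
  case (Cons m ms)
  have carry_y: "equivT n (F (xs @ y # m # ms @ x # ys)) (\<lambda>a. - 1 * F (xs @ m # y # ms @ x # ys) a)"
    using Cons.prems by (intro adjacent) auto
  have exchange: "equivT n (F (xs @ m # y # ms @ x # ys)) (\<lambda>a. - 1 * F (xs @ m # x # ms @ y # ys) a)"
    using Cons.prems Cons.IH[of "xs @ [m]"] by (simp add: add_mset_commute)
  have carry_x: "equivT n (F (xs @ m # x # ms @ y # ys)) (\<lambda>a. - 1 * F (xs @ x # m # ms @ y # ys) a)"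
    using Cons.prems by (intro adjacent) auto
  show ?case
    using equivT_trans_scaled[OF carry_y equivT_trans_scaled[OF exchange carry_x]] by simp
qed

lemma equivT_permute_list_transpose:
  fixes F :: "nat list \<Rightarrow> 'a::field point \<Rightarrow> 'a"
  assumes "i < length l" "j < length l" "i \<noteq> j"
    and adjacent: "\<And>xs x y ys. mset (xs @ x # y # ys) = mset l \<Longrightarrow>
      equivT n (F (xs @ y # x # ys)) (\<lambda>a. - 1 * F (xs @ x # y # ys) a)"
  shows "equivT n (F (permute_list (transpose i j) l)) (\<lambda>a. - 1 * F l a)"
proof -
  have ordered: "equivT n (F (permute_list (transpose i j) l)) (\<lambda>a. - 1 * F l a)"
    if ij: "i < j" "j < length l" for i j
  proof -
    obtain xs x ms y ys where l: "l = xs @ x # ms @ y # ys" "length xs = i" "Suc (i + length ms) = j"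
      using split_at_two_positions[OF ij] by blast
    have "permute_list (transpose i j) l = xs @ y # ms @ x # ys"
      using permute_list_transpose_append[of xs ms x y ys] l by simp
    then show ?thesis
      using equivT_swap_distant[where M = "mset l" and F = F and n = n, OF adjacent] l(1) by simp
  qed
  show ?thesis
    using assms(1-3) ordered[of i j] ordered[of j i] by (cases "i < j") (auto simp: transpose_commute)
qed

lemma equivT_permute_list:
  fixes F :: "nat list \<Rightarrow> 'a::field point \<Rightarrow> 'a"
  assumes "\<sigma> permutes {..<length l}"
    and adjacent: "\<And>xs x y ys. mset (xs @ x # y # ys) = mset l \<Longrightarrow>
      equivT n (F (xs @ y # x # ys)) (\<lambda>a. - 1 * F (xs @ x # y # ys) a)"
  shows "equivT n (F (permute_list \<sigma> l)) (\<lambda>a. of_int (sign \<sigma>) * F l a)"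
  using finite_lessThan assms(1)
proof (induction \<sigma> rule: permutes_rev_induct)
  case id
  then show ?case
    by (simp add: equivT_refl)
next
  case (swap i j \<sigma>)
  have compose: "permute_list (\<sigma> \<circ> transpose i j) l = permute_list (transpose i j) (permute_list \<sigma> l)"
    using swap.hyps by (intro permute_list_compose permutes_swap_id) auto
  have "equivT n (F (permute_list (transpose i j) (permute_list \<sigma> l)))
      (\<lambda>a. - 1 * F (permute_list \<sigma> l) a)"
    using swap.hyps adjacent by (intro equivT_permute_list_transpose) auto
  from equivT_trans_scaled[OF this swap.IH]
  have "equivT n (F (permute_list (\<sigma> \<circ> transpose i j) l)) (\<lambda>a. - 1 * of_int (sign \<sigma>) * F l a)"
    unfolding compose .
  moreover have "sign (\<sigma> \<circ> transpose i j) = - sign \<sigma>"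
    using sign_compose[OF permutes_imp_permutation[OF _ swap.hyps(4)] permutation_swap_id] swap.hyps(3)
    by (simp add: sign_swap_id)
  ultimately show ?case
    by (simp add: comp_def)
qed

lemma equivT_trl_swap_adjacent:
  assumes "set (xs @ x # y # ys) \<subseteq> {1..n}" "3 \<le> length (xs @ x # y # ys)"
  shows "equivT n (trl (xs @ y # x # ys)) (\<lambda>a. - 1 * trl (xs @ x # y # ys) a :: 'a::field)"
proof (cases xs)
  case Nil
  then have "ys \<noteq> []"
    using assms(2) by auto
  have "right_equivT n (Mul (Var y) (Var x)) (Mul (Var x) (Var y)) (- 1 :: 'a)"
    using assms by (intro right_equivT_commute) auto
  from equivT_trw_mul_letters[OF this _ \<open>ys \<noteq> []\<close>] show ?thesis
    using assms Nil by (simp add: trl_def)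
next
  case (Cons i xs')
  have lnword: "\<And>u v. lnword (xs @ u # v # ys) = mul_letters (Mul (Mul (lnword xs) (Var u)) (Var v)) ys"
    using Cons by (simp add: mul_letters_append)
  have prefix: "set (letters (lnword xs)) \<subseteq> {1..n}"
    using assms Cons by simp
  show ?thesis
  proof (cases "ys = []")
    case True
    have "right_equivT n (Mul (Var y) (Var x)) (Mul (Var x) (Var y)) (- 1 :: 'a)"
      using assms by (intro right_equivT_commute) auto
    from equivT_trw_Mul_left[OF this prefix] show ?thesis
      using True unfolding trl_def lnword by (simp add: trw_def otr_omult_assoc)
  next
    case False
    have "right_equivT n (Mul (Mul (lnword xs) (Var y)) (Var x)) (Mul (Mul (lnword xs) (Var x)) (Var y))
        (- 1 :: 'a)"
      using prefix assms by (intro right_equivT_swap_last) auto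
    from equivT_trw_mul_letters[OF this _ False] show ?thesis
      using assms unfolding trl_def lnword by simp
  qed
qed

lemma equivT_trl_permute_list:
  assumes "\<sigma> permutes {..<length l}" "set l \<subseteq> {1..n}" "3 \<le> length l"
  shows "equivT n (trl (permute_list \<sigma> l)) (\<lambda>a. of_int (sign \<sigma>) * trl l a :: 'a::field)"
  using assms(1)
proof (rule equivT_permute_list)
  fix xs x y ys assume "mset (xs @ x # y # ys) = mset l"
  then have "set (xs @ x # y # ys) = set l" "length (xs @ x # y # ys) = length l"
    by (metis mset_eq_setD, metis size_mset)
  then show "equivT n (trl (xs @ y # x # ys)) (\<lambda>a. - 1 * trl (xs @ x # y # ys) a :: 'a)"
    using assms(2,3) by (intro equivT_trl_swap_adjacent) auto
qed

lemma equivT_trl_mset_eq: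
  assumes "mset l' = mset l" "set l \<subseteq> {1..n}" "3 \<le> length l"
  shows "\<exists>s \<in> {1, - 1}. equivT n (trl l') (\<lambda>a. s * trl l a :: 'a::field)"
proof -
  obtain \<sigma> where \<sigma>: "\<sigma> permutes {..<length l}" "permute_list \<sigma> l = l'"
    using mset_eq_permutation[OF assms(1)] by blast
  have "equivT n (trl (permute_list \<sigma> l)) (\<lambda>a. of_int (sign \<sigma>) * trl l a :: 'a)"
    using \<sigma>(1) assms(2,3) by (rule equivT_trl_permute_list)
  then show ?thesis
    using \<sigma>(2) by (intro bexI[of _ "of_int (sign \<sigma>)"]) (auto simp: sign_def)
qed

lemma equivT_trl_repeated:
  assumes "set (x # x # cs) \<subseteq> {1..n}" "cs \<noteq> []"
  shows "equivT n (trl (x # x # cs)) (\<lambda>_. 0 :: 'a::field)"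
proof -
  have "right_equivT n (Mul (Var x) (Var x)) (Mul (Var x) (Var x)) (0::'a)"
    using assms(1) by (intro right_equivT_square) simp
  from equivT_trw_mul_letters[OF this _ assms(2)] show ?thesis
    using assms(1) by (simp add: trl_def)
qed

lemma trl_eq_if_length_le_2:
  assumes "mset l' = mset l" "length l \<le> 2"
  shows "trl l' = (trl l :: 'a::comm_ring point \<Rightarrow> 'a)"
proof -
  have length: "length l' = length l"
    using assms(1) by (metis size_mset)
  consider "length l < 2" | "length l = 2"
    using assms(2) by linarith
  then show ?thesis
  proof cases
    case 1
    then have "l' = l"
      using length assms(1) by (cases l; cases l') auto
    then show ?thesis
      by simp
  next
    case 2
    then obtain x y u v where l: "l = [x, y]" "l' = [u, v]"
      using length by (auto simp: numeral_2_eq_2 length_Suc_conv)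
    then have "l' = [x, y] \<or> l' = [y, x]"
      using assms(1) by (auto simp: add_eq_conv_diff)
    then show ?thesis
      using l by (auto simp: trl_def trw_def otr_omult_commute)
  qed
qed

lemma equivT_trw_not_multilinear:
  assumes "set (letters w) \<subseteq> {1..n}" "\<not> multilinear w" "2 < deg w"
  shows "equivT n (trw w) (\<lambda>_. 0 :: 'a::field)"
proof -
  obtain \<pi> where \<pi>: "mset \<pi> = mset (letters w)" "equivT n (trw w) (trl \<pi> :: 'a point \<Rightarrow> 'a)"
    using equivT_trw_trl assms(1) by blast
  have "\<not> distinct \<pi>"
    using assms(2) \<pi>(1) unfolding multilinear_def by (metis mset_eq_imp_distinct_iff)
  then obtain xs ys zs x where "\<pi> = xs @ [x] @ ys @ [x] @ zs"
    using not_distinct_decomp by blast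
  then have repeated: "mset \<pi> = mset (x # x # xs @ ys @ zs)"
    by simp
  have "set (x # x # xs @ ys @ zs) = set (letters w)"
    using mset_eq_setD[OF repeated] mset_eq_setD[OF \<pi>(1)] by simp
  then have letters: "set (x # x # xs @ ys @ zs) \<subseteq> {1..n}"
    using assms(1) by (simp only:)
  have "length (x # x # xs @ ys @ zs) = deg w"
    unfolding deg_def by (metis repeated \<pi>(1) size_mset)
  then have length: "3 \<le> length (x # x # xs @ ys @ zs)"
    using assms(3) by linarith
  obtain s where "equivT n (trl \<pi>) (\<lambda>a. s * trl (x # x # xs @ ys @ zs) a :: 'a)"
    using equivT_trl_mset_eq[OF repeated letters length] by blast
  moreover have "equivT n (trl (x # x # xs @ ys @ zs)) (\<lambda>_. 0 :: 'a)"
    using letters length by (intro equivT_trl_repeated) auto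
  ultimately have "equivT n (trl \<pi>) (\<lambda>_. 0 :: 'a)"
    using equivT_trans_scaled[where t = 0] by simp
  with \<pi>(2) show ?thesis
    by (rule equivT_trans)
qed

lemma equivT_trw_multilinear:
  assumes "set (letters w) \<subseteq> {1..n}" "multilinear w" "sorted_wrt (<) is" "set is = set (letters w)"
  shows "\<exists>s \<in> {1, - 1}. equivT n (trw w) (\<lambda>a. s * trl is a :: 'a::field)"
proof -
  obtain \<pi> where \<pi>: "mset \<pi> = mset (letters w)" "equivT n (trw w) (trl \<pi> :: 'a point \<Rightarrow> 'a)"
    using equivT_trw_trl assms(1) by blast
  have "distinct \<pi>" "distinct is"
    using assms(2,3) mset_eq_imp_distinct_iff[OF \<pi>(1)] by (simp_all add: multilinear_def strict_sorted_iff)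
  moreover have "set \<pi> = set is"
    using mset_eq_setD[OF \<pi>(1)] assms(4) by simp
  ultimately have \<pi>_is: "mset \<pi> = mset is"
    by (simp add: set_eq_iff_mset_eq_distinct)
  show ?thesis
  proof (cases "3 \<le> length is")
    case True
    have "set is \<subseteq> {1..n}"
      using assms(1,4) by simp
    from equivT_trl_mset_eq[OF \<pi>_is this True]
    obtain s where s: "s \<in> {1, - 1}" "equivT n (trl \<pi>) (\<lambda>a. s * trl is a :: 'a)"
      by (rule bexE)
    show ?thesis
      using equivT_trans[OF \<pi>(2) s(2)] s(1) by blast
  next
    case False
    then have "trl \<pi> = (trl is :: 'a point \<Rightarrow> 'a)"
      by (intro trl_eq_if_length_le_2[OF \<pi>_is]) simp
    then have "equivT n (trw w) (\<lambda>a. 1 * trl is a :: 'a)"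
      using \<pi>(2) by simp
    then show ?thesis
      by (rule bexI) simp
  qed
qed

theorem lemma4p2:
  fixes n :: nat
  assumes "alg_closed TYPE('a::field)"
  shows
   "(\<forall>w. set (letters w) \<subseteq> {1..n} \<longrightarrow> \<not> multilinear w \<longrightarrow> deg w > 2 \<longrightarrow>
        equivT n (trw w :: 'a point \<Rightarrow> 'a) (\<lambda>_. 0))
  \<and> (\<forall>w is. set (letters w) \<subseteq> {1..n} \<longrightarrow> multilinear w \<longrightarrow>
        sorted_wrt (<) is \<longrightarrow> set is = set (letters w) \<longrightarrow>
        (\<exists>s \<in> {1, -1}. equivT n (trw w :: 'a point \<Rightarrow> 'a) (\<lambda>a. s * trl is a)))
  \<and> (\<forall>is \<sigma>. set is \<subseteq> {1..n} \<longrightarrow> sorted_wrt (<) is \<longrightarrow> length is \<ge> 3 \<longrightarrow>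
        \<sigma> permutes {..<length is} \<longrightarrow>
        equivT n (trl (map (\<lambda>j. is ! \<sigma> j) [0..<length is]) :: 'a point \<Rightarrow> 'a)
                 (\<lambda>a. of_int (sign \<sigma>) * trl is a))"
proof (intro conjI allI impI)
  show "equivT n (trw w :: 'a point \<Rightarrow> 'a) (\<lambda>_. 0)"
    if "set (letters w) \<subseteq> {1..n}" "\<not> multilinear w" "deg w > 2" for w
    using that by (rule equivT_trw_not_multilinear)
  show "\<exists>s \<in> {1, -1}. equivT n (trw w :: 'a point \<Rightarrow> 'a) (\<lambda>a. s * trl is a)"
    if "set (letters w) \<subseteq> {1..n}" "multilinear w" "sorted_wrt (<) is" "set is = set (letters w)"
    for w "is"
    using that by (rule equivT_trw_multilinear)
  show "equivT n (trl (map (\<lambda>j. is ! \<sigma> j) [0..<length is]) :: 'a point \<Rightarrow> 'a)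
      (\<lambda>a. of_int (sign \<sigma>) * trl is a)"
    if "set is \<subseteq> {1..n}" "length is \<ge> 3" "\<sigma> permutes {..<length is}" for "is" \<sigma>
    using equivT_trl_permute_list[OF that(3,1,2)] by (simp add: permute_list_def)
qed

end
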